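(* Consider a discounted Markov decision problem with discount factor $\gamma\in(0,1)$ and the policy mirror descent method as described in the context, with $\pi^{(0)}\in\operatorname{rint}\Pi$. Let $\rho\in\Delta(\mathcal{S})$ and $\vartheta_\rho=\frac1{1-\gamma}\bigl\|d_\rho(\pi^\star)/\rho\bigr\|_\infty$. Suppose the step sizes satisfy $\eta_0>0$ and \[ \eta_{k+1}\ge\frac{\vartheta_\rho}{\vartheta_\rho-1}\eta_k,\qquad k=0,1,2,\dots \] Then for each $k\ge0$, \[ V_\rho(\pi^{(k)})-V_\rho^\star\le\Bigl(1-\frac1{\vartheta_\rho}\Bigr)^k\Bigl(V_\rho(\pi^{(0)})-V_\rho^\star+\frac{D^\star_0}{\eta_0\gamma}\Bigr). \]
   Context: A discounted Markov decision problem (cost-minimization form): finite state set $\mathcal{S}$, finite action set $\mathcal{A}$, transition probabilities $P(s'|s,a)$, cost $R:\mathcal{S}\times\mathcal{A}\to[0,1]$, discount $\gamma$. Policies $\Pi=\Delta(\mathcal{A})^{|\mathcal{S}|}$; $\operatorname{rint}\Pi$ is the set of policies with all entries $\pi_{s,a}>0$. $V_s(\pi)=\mathbf{E}\bigl[\sum_{t\ge0}\gamma^tR(s_t,a_t)\mid s_0=s\bigr]$ with $a_t\sim\pi_{s_t}$, $s_{t+1}\sim P(\cdot|s_t,a_t)$; $V_\rho(\pi)=\sum_s\rho_sV_s(\pi)$; $V^\star_\rho=\min_{\pi\in\Pi}V_\rho(\pi)$; $\pi^\star$ denotes a policy minimizing $V_s$ simultaneously for all $s$. $Q_{s,a}(\pi)=R_{s,a}+\gamma\sum_{s'}P(s'|s,a)V_{s'}(\pi)$,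 $Q_s(\pi)\in\mathbf{R}^{|\mathcal{A}|}$. Discounted state visitation: $d_{s,s'}(\pi)=(1-\gamma)\sum_{t\ge0}\gamma^t\Pr^\pi(s_t=s'\mid s_0=s)$, $d_{\rho,s'}(\pi)=\sum_s\rho_sd_{s,s'}(\pi)$. For $p,q\in\Delta(\mathcal{S})$, $\|p/q\|_\infty=\max_sp_s/q_s$ with $0/0=1$. Bregman divergence: $h:\mathbf{R}^{|\mathcal{A}|}\to\mathbf{R}\cup\{+\infty\}$ is a convex function of Legendre type (proper, closed, essentially smooth, strictly convex on the relative interior of its domain) with $\Delta(\mathcal{A})\subseteq\operatorname{dom}h$ and $\operatorname{rint}\Delta(\mathcal{A})\subseteq\operatorname{rint}\operatorname{dom}h$; $D(p,p')=h(p)-h(p')-\langle\nabla h(p'),p-p'\rangle$. Policy mirror descent: for each $s\in\mathcal{S}$, $\pi^{(k+1)}_s=\arg\min_{p\in\Delta(\mathcal{A})}\{\eta_k\langle Q_s(\pi^{(k)}),p\rangle+D(p,\pi^{(k)}_s)\}$. Notation: $D^\star_k=\sum_{s}d_{\rho,s}(\pi^\star)D(\pi^\star_s,\pi^{(k)}_s)$. *)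

theory Defs
  imports "HOL-Analysis.Analysis"
begin

definition actdist :: "(real^'a::finite) set" where
  "actdist = {p. (\<forall>a. 0 \<le> p $ a) \<and> (\<Sum>a\<in>UNIV. p $ a) = 1}"

definition rint_actdist :: "(real^'a::finite) set" where
  "rint_actdist = {p. (\<forall>a. 0 < p $ a) \<and> (\<Sum>a\<in>UNIV. p $ a) = 1}"

definition policies :: "('s::finite \<Rightarrow> real^'a::finite) set" where
  "policies = {\<pi>. \<forall>s. \<pi> s \<in> actdist}"

definition rint_policies :: "('s::finite \<Rightarrow> real^'a::finite) set" where
  "rint_policies = {\<pi>. \<forall>s. \<pi> s \<in> rint_actdist}"

definition is_mdp :: "('s::finite \<Rightarrow> 'a::finite \<Rightarrow> 's \<Rightarrow> real) \<Rightarrow> ('s \<Rightarrow> 'a \<Rightarrow> real) \<Rightarrow> real \<Rightarrow> bool" where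
  "is_mdp P R \<gamma> \<longleftrightarrow>
     (\<forall>s a s'. 0 \<le> P s a s') \<and> (\<forall>s a. (\<Sum>s'\<in>UNIV. P s a s') = 1) \<and>
     (\<forall>s a. 0 \<le> R s a \<and> R s a \<le> 1) \<and> 0 < \<gamma> \<and> \<gamma> < 1"

definition Ppol :: "('s::finite \<Rightarrow> 'a::finite \<Rightarrow> 's \<Rightarrow> real) \<Rightarrow> ('s \<Rightarrow> real^'a) \<Rightarrow> 's \<Rightarrow> 's \<Rightarrow> real" where
  "Ppol P \<pi> s s' = (\<Sum>a\<in>UNIV. \<pi> s $ a * P s a s')"

definition Rpol :: "('s::finite \<Rightarrow> 'a::finite \<Rightarrow> real) \<Rightarrow> ('s \<Rightarrow> real^'a) \<Rightarrow> 's \<Rightarrow> real" where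
  "Rpol R \<pi> s = (\<Sum>a\<in>UNIV. \<pi> s $ a * R s a)"

fun Pstep :: "('s::finite \<Rightarrow> 'a::finite \<Rightarrow> 's \<Rightarrow> real) \<Rightarrow> ('s \<Rightarrow> real^'a) \<Rightarrow> nat \<Rightarrow> 's \<Rightarrow> 's \<Rightarrow> real" where
  "Pstep P \<pi> 0 s s' = (if s = s' then 1 else 0)"
| "Pstep P \<pi> (Suc t) s s'' = (\<Sum>s'\<in>UNIV. Pstep P \<pi> t s s' * Ppol P \<pi> s' s'')"

definition Vs :: "('s::finite \<Rightarrow> 'a::finite \<Rightarrow> 's \<Rightarrow> real) \<Rightarrow> ('s \<Rightarrow> 'a \<Rightarrow> real) \<Rightarrow> real \<Rightarrow> ('s \<Rightarrow> real^'a) \<Rightarrow> 's \<Rightarrow> real" where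
  "Vs P R \<gamma> \<pi> s = (\<Sum>t. \<gamma> ^ t * (\<Sum>s'\<in>UNIV. Pstep P \<pi> t s s' * Rpol R \<pi> s'))"

definition Vrho :: "('s::finite \<Rightarrow> 'a::finite \<Rightarrow> 's \<Rightarrow> real) \<Rightarrow> ('s \<Rightarrow> 'a \<Rightarrow> real) \<Rightarrow> real \<Rightarrow> ('s \<Rightarrow> real) \<Rightarrow> ('s \<Rightarrow> real^'a) \<Rightarrow> real" where
  "Vrho P R \<gamma> \<rho> \<pi> = (\<Sum>s\<in>UNIV. \<rho> s * Vs P R \<gamma> \<pi> s)"

definition Vstar :: "('s::finite \<Rightarrow> 'a::finite \<Rightarrow> 's \<Rightarrow> real) \<Rightarrow> ('s \<Rightarrow> 'a \<Rightarrow> real) \<Rightarrow> real \<Rightarrow> ('s \<Rightarrow> real) \<Rightarrow> real" where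
  "Vstar P R \<gamma> \<rho> = (INF \<pi>\<in>policies. Vrho P R \<gamma> \<rho> \<pi>)"

definition Qsa :: "('s::finite \<Rightarrow> 'a::finite \<Rightarrow> 's \<Rightarrow> real) \<Rightarrow> ('s \<Rightarrow> 'a \<Rightarrow> real) \<Rightarrow> real \<Rightarrow> ('s \<Rightarrow> real^'a) \<Rightarrow> 's \<Rightarrow> real^'a" where
  "Qsa P R \<gamma> \<pi> s = (\<chi> a. R s a + \<gamma> * (\<Sum>s'\<in>UNIV. P s a s' * Vs P R \<gamma> \<pi> s'))"

definition dvis :: "('s::finite \<Rightarrow> 'a::finite \<Rightarrow> 's \<Rightarrow> real) \<Rightarrow> real \<Rightarrow> ('s \<Rightarrow> real^'a) \<Rightarrow> 's \<Rightarrow> 's \<Rightarrow> real" where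
  "dvis P \<gamma> \<pi> s s' = (1 - \<gamma>) * (\<Sum>t. \<gamma> ^ t * Pstep P \<pi> t s s')"

definition drho :: "('s::finite \<Rightarrow> 'a::finite \<Rightarrow> 's \<Rightarrow> real) \<Rightarrow> real \<Rightarrow> ('s \<Rightarrow> real) \<Rightarrow> ('s \<Rightarrow> real^'a) \<Rightarrow> 's \<Rightarrow> real" where
  "drho P \<gamma> \<rho> \<pi> s' = (\<Sum>s\<in>UNIV. \<rho> s * dvis P \<gamma> \<pi> s s')"

text \<open>||p/q||_inf = max_s p_s/q_s with 0/0 = 1 (and c/0 = +infinity for c > 0).\<close>
definition ratio_inf :: "('s::finite \<Rightarrow> real) \<Rightarrow> ('s \<Rightarrow> real) \<Rightarrow> ereal" where
  "ratio_inf p q = Max ((\<lambda>s. if q s = 0 then (if p s = 0 then 1 else \<infinity>) else ereal (p s / q s)) ` UNIV)"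

definition strictly_convex_on :: "'v::real_vector set \<Rightarrow> ('v \<Rightarrow> real) \<Rightarrow> bool" where
  "strictly_convex_on S f \<longleftrightarrow> (\<forall>x\<in>S. \<forall>y\<in>S. x \<noteq> y \<longrightarrow>
      (\<forall>u::real. 0 < u \<and> u < 1 \<longrightarrow> f (u *\<^sub>R x + (1 - u) *\<^sub>R y) < u * f x + (1 - u) * f y))"

text \<open>The extended-value convex function h equals the real function h on its effective
domain C and +infinity outside C.  Legendre type (Rockafellar, Sec. 26):
proper (C nonempty), closed (closed epigraph), convex, essentially smooth
(interior C nonempty, h differentiable on interior C, gradient norm blows up at
boundary points), strictly convex on rint C.\<close>
definition legendre :: "(real^'a::finite) set \<Rightarrow> (real^'a \<Rightarrow> real) \<Rightarrow> bool" where
  "legendre C h \<longleftrightarrow>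
     C \<noteq> {} \<and> convex C \<and> convex_on C h \<and>
     closed {(x, t::real). x \<in> C \<and> h x \<le> t} \<and>
     interior C \<noteq> {} \<and>
     (\<forall>x\<in>interior C. h differentiable (at x)) \<and>
     (\<forall>xs y. (\<forall>n. xs n \<in> interior C) \<longrightarrow> xs \<longlonglongrightarrow> y \<longrightarrow> y \<in> frontier (interior C) \<longrightarrow>
        filterlim (\<lambda>n. onorm (frechet_derivative h (at (xs n)))) at_top sequentially) \<and>
     strictly_convex_on (rel_interior C) h"

definition bregman :: "(real^'a::finite \<Rightarrow> real) \<Rightarrow> real^'a \<Rightarrow> real^'a \<Rightarrow> real" where
  "bregman h p p' = h p - h p' - frechet_derivative h (at p') (p - p')"

definition Dstar :: "('s::finite \<Rightarrow> 'a::finite \<Rightarrow> 's \<Rightarrow> real) \<Rightarrow> real \<Rightarrow> ('s \<Rightarrow> real) \<Rightarrow> (real^'a \<Rightarrow> real)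
    \<Rightarrow> ('s \<Rightarrow> real^'a) \<Rightarrow> ('s \<Rightarrow> real^'a) \<Rightarrow> real" where
  "Dstar P \<gamma> \<rho> h \<pi>s \<pi> = (\<Sum>s\<in>UNIV. drho P \<gamma> \<rho> \<pi>s s * bregman h (\<pi>s s) (\<pi> s))"

definition pmd_step :: "('s::finite \<Rightarrow> 'a::finite \<Rightarrow> 's \<Rightarrow> real) \<Rightarrow> ('s \<Rightarrow> 'a \<Rightarrow> real) \<Rightarrow> real \<Rightarrow> (real^'a \<Rightarrow> real)
    \<Rightarrow> real \<Rightarrow> ('s \<Rightarrow> real^'a) \<Rightarrow> ('s \<Rightarrow> real^'a) \<Rightarrow> bool" where
  "pmd_step P R \<gamma> h \<eta> \<pi> \<pi>' \<longleftrightarrow> (\<forall>s. is_arg_min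
      (\<lambda>p. \<eta> * (Qsa P R \<gamma> \<pi> s \<bullet> p) + bregman h p (\<pi> s)) (\<lambda>p. p \<in> actdist) (\<pi>' s))"

end

theory Submission
  imports Defs
begin

text \<open>Each step of policy mirror descent is a Bregman proximal step, so in every state the
  three-point inequality compares the new policy with \<pi>* up to the decrease
  D(\<pi>*_s, \<pi>(k)_s) - D(\<pi>*_s, \<pi>(k+1)_s); essential smoothness of h keeps all iterates in
  the interior of dom h, where h is differentiable. Weighting by d_\<rho>(\<pi>*) and using the
  performance difference lemma twice, against \<pi>* and between consecutive iterates (whose
  improvement is nonpositive in every state and whose visitation measure dominates (1 - \<gamma>) \<rho>),
  gives
    \<theta> (V(\<pi>(k+1)) - V*) \<le> (\<theta> - 1) (V(\<pi>(k)) - V*) + (D*_k - D*_(k+1)) / ((1 - \<gamma>) \<eta>_k).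
  Under the step size condition the potential V(\<pi>(k)) - V* + D*_k / ((\<theta> - 1)(1 - \<gamma>) \<eta>_k)
  therefore contracts by the factor 1 - 1/\<theta>. For \<theta> = \<infinity> the bound is just the monotonicity
  of V(\<pi>(k)).\<close>

section \<open>Convex functions and their derivatives\<close>

lemma directional_derivative_at_right:
  fixes h :: "'v::real_normed_vector \<Rightarrow> real"
  assumes "(h has_derivative L) (at x)"
  shows "((\<lambda>t. (h (x + t *\<^sub>R v) - h x) / t) \<longlongrightarrow> L v) (at_right 0)"
proof -
  have "((\<lambda>t::real. x + t *\<^sub>R v) has_derivative (\<lambda>t. t *\<^sub>R v)) (at 0)"
    by (auto intro!: derivative_eq_intros)
  from has_derivative_compose[OF this, of h L]
  have "((\<lambda>t. h (x + t *\<^sub>R v)) has_derivative (\<lambda>t. L v * t)) (at 0)"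
    using assms linear_scale[OF has_derivative_linear[OF assms]] by (simp add: mult.commute)
  then have "((\<lambda>t. (h (x + t *\<^sub>R v) - h x) / t) \<longlongrightarrow> L v) (at 0)"
    by (simp add: has_field_derivative_def [symmetric] has_field_derivative_iff)
  then show ?thesis
    by (rule tendsto_mono[rotated]) (simp add: at_le)
qed

lemma derivative_le_of_increments_le:
  fixes h :: "'v::real_normed_vector \<Rightarrow> real"
  assumes "(h has_derivative L) (at x)"
    and "\<And>t. 0 < t \<Longrightarrow> t < 1 \<Longrightarrow> h (x + t *\<^sub>R v) - h x \<le> t * c"
  shows "L v \<le> c"
proof (rule tendsto_upperbound[OF directional_derivative_at_right[OF assms(1)]])
  have "\<forall>\<^sub>F t in at_right 0. t \<in> {0<..<1::real}"
    by (rule eventually_at_right_real) simp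
  then show "\<forall>\<^sub>F t in at_right 0. (h (x + t *\<^sub>R v) - h x) / t \<le> c"
    by eventually_elim (use assms(2) in \<open>auto simp: divide_le_eq mult.commute\<close>)
qed simp

lemma derivative_ge_of_increments_ge:
  fixes h :: "'v::real_normed_vector \<Rightarrow> real"
  assumes "(h has_derivative L) (at x)"
    and "\<And>t. 0 < t \<Longrightarrow> t < 1 \<Longrightarrow> t * c \<le> h (x + t *\<^sub>R v) - h x"
  shows "c \<le> L v"
proof -
  have "((\<lambda>x. - h x) has_derivative (\<lambda>v. - L v)) (at x)"
    using assms(1) by (rule has_derivative_minus)
  then have "- L v \<le> - c"
    by (rule derivative_le_of_increments_le) (use assms(2) in force)
  then show ?thesis by simp
qed

lemma convex_on_derivative_le:
  fixes h :: "'v::real_normed_vector \<Rightarrow> real"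
  assumes "(h has_derivative L) (at x)" "convex_on C h" "x \<in> C" "y \<in> C"
  shows "L (y - x) \<le> h y - h x"
proof (rule derivative_le_of_increments_le[OF assms(1)])
  fix t :: real assume "0 < t" "t < 1"
  then have "h ((1 - t) *\<^sub>R x + t *\<^sub>R y) \<le> (1 - t) * h x + t * h y"
    using convex_onD[OF assms(2)] assms(3,4) by simp
  moreover have "x + t *\<^sub>R (y - x) = (1 - t) *\<^sub>R x + t *\<^sub>R y"
    by (simp add: algebra_simps)
  ultimately show "h (x + t *\<^sub>R (y - x)) - h x \<le> t * (h y - h x)"
    by (simp add: algebra_simps)
qed

lemma onorm_le_of_ball_bound:
  fixes L :: "'v::{real_normed_vector, perfect_space} \<Rightarrow> real"
  assumes "linear L" "0 < r" "\<And>w. norm w \<le> r \<Longrightarrow> L w \<le> K"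
  shows "onorm L \<le> K / r"
proof (rule onorm_le)
  fix x :: 'v
  show "norm (L x) \<le> K / r * norm x"
  proof (cases "x = 0")
    case True
    then show ?thesis using assms(1) by (simp add: linear_0)
  next
    case False
    define w where "w = (r / norm x) *\<^sub>R x"
    have "norm w = r" "norm (- w) = r"
      using False assms(2) by (simp_all add: w_def)
    then have "L w \<le> K" "L (- w) \<le> K"
      using assms(3) by simp_all
    then have "\<bar>L w\<bar> \<le> K"
      using linear_neg[OF assms(1)] by simp
    moreover have "L w = r / norm x * L x"
      using assms(1) by (simp add: w_def linear_scale)
    ultimately have "r / norm x * \<bar>L x\<bar> \<le> K"
      using assms(2) by (simp add: abs_mult)
    then show ?thesis
      using False assms(2) by (simp add: field_simps mult.commute)
  qed
qed

lemma convex_derivative_onorm_bound: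
  fixes h :: "'v::{real_normed_vector, perfect_space} \<Rightarrow> real"
  assumes "(h has_derivative L) (at x)" "convex_on C h" "x \<in> C"
    and "0 < r" "cball z r \<subseteq> C" "\<And>y. y \<in> cball z r \<Longrightarrow> h y \<le> B" "- M \<le> L (z - x)"
  shows "onorm L \<le> (B - h x + M) / r"
proof (rule onorm_le_of_ball_bound[OF has_derivative_linear[OF assms(1)] assms(4)])
  fix w :: 'v assume "norm w \<le> r"
  then have zw: "z + w \<in> cball z r" by (simp add: dist_norm)
  have "L (z + w - x) \<le> h (z + w) - h x"
    using convex_on_derivative_le[OF assms(1-3)] zw assms(5) by blast
  moreover have "L (z + w - x) = L w + L (z - x)"
    using linear_add[OF has_derivative_linear[OF assms(1)], of w "z - x"] by (simp add: algebra_simps)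
  ultimately show "L w \<le> B - h x + M"
    using assms(6)[OF zw] assms(7) by linarith
qed

section \<open>The Bregman proximal step on the simplex\<close>

lemma convex_actdist: "convex actdist"
  unfolding convex_def actdist_def
  by (auto simp: sum.distrib sum_distrib_left[symmetric])

lemma legendre_has_derivative:
  assumes "legendre C h" "x \<in> interior C"
  shows "(h has_derivative frechet_derivative h (at x)) (at x)"
  using assms unfolding legendre_def by (auto simp: frechet_derivative_works)

lemma legendre_rel_interior_eq:
  assumes "legendre C h"
  shows "rel_interior C = interior C"
  using assms rel_interior_nonempty_interior unfolding legendre_def by blast

lemma legendre_interior_of_bounded_derivative:
  assumes leg: "legendre C h" and z: "z \<in> interior C" and p: "p \<in> C"
    and bound: "\<And>t. 0 < t \<Longrightarrow> t \<le> 1 \<Longrightarrow> onorm (frechet_derivative h (at (p - t *\<^sub>R (p - z)))) \<le> K"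
  shows "p \<in> interior C"
proof (rule ccontr)
  assume p_notin: "p \<notin> interior C"
  define xs where "xs n = p - (1 / real (Suc n)) *\<^sub>R (p - z)" for n
  have xs_interior: "\<forall>n. xs n \<in> interior C"
    using leg z p unfolding xs_def legendre_def by (auto intro: mem_interior_convex_shrink)
  have "(\<lambda>n. 1 / real (Suc n)) \<longlonglongrightarrow> 0"
    using LIMSEQ_Suc[OF lim_const_over_n[of 1]] by simp
  then have "xs \<longlonglongrightarrow> p - 0 *\<^sub>R (p - z)"
    unfolding xs_def by (intro tendsto_intros)
  then have xs_lim: "xs \<longlonglongrightarrow> p" by simp
  then have "p \<in> frontier (interior C)"
    using xs_interior p_notin closure_sequential by (auto simp: frontier_def)
  then have "filterlim (\<lambda>n. onorm (frechet_derivative h (at (xs n)))) at_top sequentially"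
    using leg xs_interior xs_lim unfolding legendre_def by blast
  then obtain n where "K < onorm (frechet_derivative h (at (xs n)))"
    unfolding filterlim_at_top_dense eventually_sequentially by (meson order.refl)
  then show False using bound[of "1 / real (Suc n)"] by (simp add: xs_def)
qed

lemma pmd_argmin_increment:
  fixes h :: "real^'a \<Rightarrow> real"
  assumes "h differentiable (at z)"
    and pmin: "is_arg_min (\<lambda>p. \<eta> * (q \<bullet> p) + bregman h p z) (\<lambda>p. p \<in> actdist) p"
    and "y \<in> actdist" "0 \<le> t" "t \<le> 1"
  shows "t * (frechet_derivative h (at z) (y - p) - \<eta> * (q \<bullet> (y - p)))
           \<le> h (p + t *\<^sub>R (y - p)) - h p"
proof -
  define L where "L = frechet_derivative h (at z)"
  have lin: "linear L"
    using assms(1) frechet_derivative_works has_derivative_linear unfolding L_def by blast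
  have "p + t *\<^sub>R (y - p) = (1 - t) *\<^sub>R p + t *\<^sub>R y"
    by (simp add: algebra_simps)
  moreover have "p \<in> actdist"
    using pmin unfolding is_arg_min_def by simp
  ultimately have "p + t *\<^sub>R (y - p) \<in> actdist"
    using convexD_alt[OF convex_actdist] assms(3-5) by metis
  then have "\<eta> * (q \<bullet> p) + bregman h p z
      \<le> \<eta> * (q \<bullet> (p + t *\<^sub>R (y - p))) + bregman h (p + t *\<^sub>R (y - p)) z"
    using pmin unfolding is_arg_min_def by (meson not_le)
  moreover have "L (p + t *\<^sub>R (y - p) - z) = L (p - z) + t * L (y - p)"
  proof -
    have eq: "p + t *\<^sub>R (y - p) - z = (p - z) + t *\<^sub>R (y - p)"
      by (simp add: algebra_simps)
    show ?thesis
      by (simp only: eq linear_add[OF lin] linear_scale[OF lin] real_scaleR_def)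
  qed
  ultimately show ?thesis
    unfolding bregman_def L_def[symmetric] by (simp add: algebra_simps inner_add_right)
qed

text \<open>If p were on the boundary, the derivatives of h along the segment from z to p would stay
  bounded, since optimality of p bounds their slope towards z from below; essential smoothness
  forbids this.\<close>
lemma pmd_argmin_interior:
  fixes h :: "real^'a \<Rightarrow> real"
  assumes leg: "legendre C h" and dom: "actdist \<subseteq> C"
    and z: "z \<in> actdist" "z \<in> interior C"
    and pmin: "is_arg_min (\<lambda>p. \<eta> * (q \<bullet> p) + bregman h p z) (\<lambda>p. p \<in> actdist) p"
  shows "p \<in> interior C"
proof -
  have cvx: "convex C" and cvh: "convex_on C h"
    using leg unfolding legendre_def by auto
  have pC: "p \<in> C" and zC: "z \<in> C"
    using pmin dom z(1) unfolding is_arg_min_def by auto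
  define v where "v = z - p"
  define x where "x t = p - t *\<^sub>R (p - z)" for t :: real
  define L where "L t = frechet_derivative h (at (x t))" for t
  define Lz where "Lz = frechet_derivative h (at z)"
  define c where "c = Lz v - \<eta> * (q \<bullet> v)"
  have x_interior: "x t \<in> interior C" if "0 < t" "t \<le> 1" for t
    unfolding x_def using mem_interior_convex_shrink[OF cvx z(2) pC that] .
  have dx: "(h has_derivative L t) (at (x t))" if "0 < t" "t \<le> 1" for t
    unfolding L_def using legendre_has_derivative[OF leg x_interior[OF that]] .
  have dz: "(h has_derivative Lz) (at z)"
    unfolding Lz_def by (rule legendre_has_derivative[OF leg z(2)])
  have lin_x: "linear (L t)" if "0 < t" "t \<le> 1" for t
    using dx[OF that] by (rule has_derivative_linear)
  have slope: "c \<le> L t v" if t: "0 < t" "t \<le> 1" for t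
  proof -
    have "x t = p + t *\<^sub>R v"
      unfolding x_def v_def by (simp add: algebra_simps)
    then have "t * c \<le> h (x t) - h p"
      using pmd_argmin_increment[OF differentiableI[OF dz] pmin z(1), of t] t
      unfolding c_def v_def Lz_def by simp
    moreover have "p - x t = (- t) *\<^sub>R v"
      unfolding x_def v_def by (simp add: algebra_simps)
    then have "L t (p - x t) = - t * L t v"
      using linear_scale[OF lin_x[OF t], of "- t" v] by (simp only: real_scaleR_def)
    moreover have "L t (p - x t) \<le> h p - h (x t)"
      using convex_on_derivative_le[OF dx[OF t] cvh] x_interior[OF t] interior_subset pC by blast
    ultimately have "t * c \<le> t * L t v" by linarith
    then show ?thesis using t by simp
  qed
  obtain r where r: "0 < r" "cball z r \<subseteq> interior C"
    using z(2) open_contains_cball open_interior by blast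
  have "continuous_on (cball z r) h"
    using r(2) legendre_has_derivative[OF leg]
    by (meson continuous_at_imp_continuous_on has_derivative_continuous subsetD)
  then have "bounded (h ` cball z r)"
    by (simp add: compact_continuous_image compact_imp_bounded)
  then obtain B where B: "\<And>y. y \<in> cball z r \<Longrightarrow> h y \<le> B"
    unfolding bounded_real by (meson abs_le_D1 image_eqI)
  have "onorm (L t) \<le> (B - (h z - \<bar>Lz v\<bar>) + \<bar>c\<bar>) / r" if t: "0 < t" "t \<le> 1" for t
  proof -
    have scaled: "- \<bar>a\<bar> \<le> (1 - t) * a" for a
    proof -
      have "(1 - t) * (- a) \<le> (1 - t) * \<bar>a\<bar>"
        using t by (intro mult_left_mono) auto
      then show ?thesis
        using t mult_left_le_one_le[of "\<bar>a\<bar>" "1 - t"] by simp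
    qed
    have xC: "x t \<in> C"
      using x_interior[OF t] interior_subset by blast
    have "x t - z = (1 - t) *\<^sub>R (- v)"
      unfolding x_def v_def by (simp add: algebra_simps)
    then have "Lz (x t - z) = (1 - t) * (- Lz v)"
      using linear_scale[OF has_derivative_linear[OF dz]] linear_neg[OF has_derivative_linear[OF dz]]
      by (simp add: real_scaleR_def)
    then have hx: "h z - \<bar>Lz v\<bar> \<le> h (x t)"
      using convex_on_derivative_le[OF dz cvh zC xC] scaled[of "- Lz v"] by simp
    have "z - x t = (1 - t) *\<^sub>R v"
      unfolding x_def v_def by (simp add: algebra_simps)
    then have "- \<bar>c\<bar> \<le> L t (z - x t)"
      using linear_scale[OF lin_x[OF t]] slope[OF t] scaled[of c] t
      by (simp add: order_trans[OF _ mult_left_mono])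
    then have "onorm (L t) \<le> (B - h (x t) + \<bar>c\<bar>) / r"
      using convex_derivative_onorm_bound[OF dx[OF t] cvh xC r(1) _ B] r(2) interior_subset
      by blast
    also have "\<dots> \<le> (B - (h z - \<bar>Lz v\<bar>) + \<bar>c\<bar>) / r"
      using hx r(1) by (intro divide_right_mono) auto
    finally show ?thesis .
  qed
  then show ?thesis
    unfolding L_def x_def by (rule legendre_interior_of_bounded_derivative[OF leg z(2) pC])
qed

lemma bregman_nonneg:
  assumes "legendre C h" "x \<in> C" "z \<in> interior C"
  shows "0 \<le> bregman h x z"
proof -
  have "convex_on C h" "z \<in> C"
    using assms interior_subset unfolding legendre_def by auto
  then show ?thesis
    using convex_on_derivative_le[OF legendre_has_derivative[OF assms(1,3)]] assms(2)
    unfolding bregman_def by simp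
qed

lemma bregman_self:
  assumes "legendre C h" "z \<in> interior C"
  shows "bregman h z z = 0"
  using linear_0[OF has_derivative_linear[OF legendre_has_derivative[OF assms]]]
  unfolding bregman_def by simp

lemma bregman_pos:
  assumes leg: "legendre C h" and "p \<in> interior C" "z \<in> interior C" "p \<noteq> z"
  shows "0 < bregman h p z"
proof -
  define L where "L = frechet_derivative h (at z)"
  define m where "m = (1/2) *\<^sub>R p + (1/2) *\<^sub>R z"
  have dz: "(h has_derivative L) (at z)"
    unfolding L_def by (rule legendre_has_derivative[OF leg assms(3)])
  have cvx: "convex C" and cvh: "convex_on C h"
    and strict: "strictly_convex_on (interior C) h"
    using leg legendre_rel_interior_eq[OF leg] unfolding legendre_def by auto
  have "\<forall>u. 0 < u \<and> u < 1 \<longrightarrow> h (u *\<^sub>R p + (1 - u) *\<^sub>R z) < u * h p + (1 - u) * h z"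
    using strict assms(2-4) unfolding strictly_convex_on_def by blast
  from this[rule_format, of "1/2"] have chord: "h m < (1/2) * h p + (1/2) * h z"
    unfolding m_def by simp
  have "m \<in> C"
    using convexD[OF cvx, of p z "1/2" "1/2"] assms(2,3) interior_subset
    unfolding m_def by auto
  then have "L (m - z) \<le> h m - h z"
    using convex_on_derivative_le[OF dz cvh] assms(3) interior_subset by blast
  moreover have "m - z = (1/2) *\<^sub>R (p - z)"
    unfolding m_def by (simp add: vec_eq_iff field_simps)
  then have "L (m - z) = (1/2) * L (p - z)"
    using linear_scale[OF has_derivative_linear[OF dz]] by simp
  ultimately show ?thesis
    using chord unfolding bregman_def L_def[symmetric] by simp
qed

lemma bregman_three_point_identity:
  assumes "linear (frechet_derivative h (at z))"
  shows "bregman h x z - bregman h x p - bregman h p z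
           = frechet_derivative h (at p) (x - p) - frechet_derivative h (at z) (x - p)"
  using linear_diff[OF assms, of x p] linear_diff[OF assms, of x z] linear_diff[OF assms, of p z]
  unfolding bregman_def by simp

lemma pmd_three_point:
  fixes h :: "real^'a \<Rightarrow> real"
  assumes leg: "legendre C h" and dom: "actdist \<subseteq> C"
    and z: "z \<in> actdist" "z \<in> interior C"
    and pmin: "is_arg_min (\<lambda>p. \<eta> * (q \<bullet> p) + bregman h p z) (\<lambda>p. p \<in> actdist) p"
    and x: "x \<in> actdist"
  shows "\<eta> * (q \<bullet> p) + bregman h p z \<le> \<eta> * (q \<bullet> x) + bregman h x z - bregman h x p"
proof -
  have dz: "(h has_derivative frechet_derivative h (at z)) (at z)"
    by (rule legendre_has_derivative[OF leg z(2)])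
  have dp: "(h has_derivative frechet_derivative h (at p)) (at p)"
    by (rule legendre_has_derivative[OF leg pmd_argmin_interior[OF leg dom z pmin]])
  have "frechet_derivative h (at z) (x - p) - \<eta> * (q \<bullet> (x - p))
      \<le> frechet_derivative h (at p) (x - p)"
    by (rule derivative_ge_of_increments_ge[OF dp])
      (use pmd_argmin_increment[OF differentiableI[OF dz] pmin x] in auto)
  moreover have "\<eta> * (q \<bullet> x) = \<eta> * (q \<bullet> p) + \<eta> * (q \<bullet> (x - p))"
    by (simp add: inner_diff_right right_diff_distrib)
  ultimately show ?thesis
    using bregman_three_point_identity[OF has_derivative_linear[OF dz], of x p] by linarith
qed

lemma pmd_descent:
  fixes h :: "real^'a \<Rightarrow> real"
  assumes leg: "legendre C h" and dom: "actdist \<subseteq> C"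
    and z: "z \<in> actdist" "z \<in> interior C"
    and pmin: "is_arg_min (\<lambda>p. \<eta> * (q \<bullet> p) + bregman h p z) (\<lambda>p. p \<in> actdist) p"
    and "0 \<le> \<eta>"
  shows "q \<bullet> p \<le> q \<bullet> z"
proof -
  have p: "p \<in> interior C" "p \<in> C"
    using pmd_argmin_interior[OF leg dom z pmin] pmin dom unfolding is_arg_min_def by auto
  have main: "\<eta> * (q \<bullet> p) + bregman h p z + bregman h z p \<le> \<eta> * (q \<bullet> z)"
    using pmd_three_point[OF leg dom z pmin z(1)] bregman_self[OF leg z(2)] by simp
  have nonneg: "0 \<le> bregman h p z" "0 \<le> bregman h z p"
    using bregman_nonneg[OF leg] p z dom by auto
  show ?thesis
  proof (cases "\<eta> = 0")
    case True
    then have "\<not> 0 < bregman h p z"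
      using main nonneg by simp
    then have "p = z"
      using bregman_pos[OF leg p(1) z(2)] by blast
    then show ?thesis by simp
  next
    case False
    then have "\<eta> * (q \<bullet> p) \<le> \<eta> * (q \<bullet> z)"
      using main nonneg by linarith
    then show ?thesis
      using False \<open>0 \<le> \<eta>\<close> by (simp add: mult_le_cancel_left_pos)
  qed
qed

section \<open>Discounted Markov decision processes\<close>

definition Pexp :: "('s::finite \<Rightarrow> 'a::finite \<Rightarrow> 's \<Rightarrow> real) \<Rightarrow> ('s \<Rightarrow> real^'a) \<Rightarrow> nat \<Rightarrow> 's
    \<Rightarrow> ('s \<Rightarrow> real) \<Rightarrow> real" where
  "Pexp P \<pi> t s g = (\<Sum>s'\<in>UNIV. Pstep P \<pi> t s s' * g s')"

lemma Pexp_0: "Pexp P \<pi> 0 s g = g s"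
  unfolding Pexp_def by (simp add: of_bool_def[symmetric])

lemma Pexp_Suc: "Pexp P \<pi> (Suc t) s g = Pexp P \<pi> t s (\<lambda>s'. \<Sum>s''\<in>UNIV. Ppol P \<pi> s' s'' * g s'')"
  unfolding Pexp_def Pstep.simps sum_distrib_left sum_distrib_right
  by (rule trans[OF sum.swap]) (simp add: mult_ac)

lemma Pstep_Suc_left: "Pstep P \<pi> (Suc t) s s'' = (\<Sum>s'\<in>UNIV. Ppol P \<pi> s s' * Pstep P \<pi> t s' s'')"
proof (induction t arbitrary: s'')
  case 0
  show ?case by (simp add: of_bool_def[symmetric])
next
  case (Suc t)
  have "Pstep P \<pi> (Suc (Suc t)) s s''
      = (\<Sum>s'\<in>UNIV. (\<Sum>u\<in>UNIV. Ppol P \<pi> s u * Pstep P \<pi> t u s') * Ppol P \<pi> s' s'')"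
    using Suc by simp
  also have "\<dots> = (\<Sum>u\<in>UNIV. Ppol P \<pi> s u * (\<Sum>s'\<in>UNIV. Pstep P \<pi> t u s' * Ppol P \<pi> s' s''))"
    unfolding sum_distrib_left sum_distrib_right by (rule trans[OF sum.swap]) (simp add: mult_ac)
  finally show ?case by simp
qed

lemma Pexp_Suc_left: "Pexp P \<pi> (Suc t) s g = (\<Sum>s'\<in>UNIV. Ppol P \<pi> s s' * Pexp P \<pi> t s' g)"
  unfolding Pexp_def Pstep_Suc_left sum_distrib_left sum_distrib_right
  by (rule trans[OF sum.swap]) (simp add: mult_ac)

lemma Pexp_indicator: "Pexp P \<pi> t s (\<lambda>x. if x = s' then 1 else 0) = Pstep P \<pi> t s s'"
  unfolding Pexp_def by (simp add: of_bool_def[symmetric])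

lemma Vs_eq_Pexp: "Vs P R \<gamma> \<pi> s = (\<Sum>t. \<gamma> ^ t * Pexp P \<pi> t s (Rpol R \<pi>))"
  unfolding Vs_def Pexp_def ..

lemma inner_Qsa:
  "\<pi>' s \<bullet> Qsa P R \<gamma> \<pi> s = Rpol R \<pi>' s + \<gamma> * (\<Sum>s'\<in>UNIV. Ppol P \<pi>' s s' * Vs P R \<gamma> \<pi> s')"
proof -
  have "(\<Sum>a\<in>UNIV. \<pi>' s $ a * (\<gamma> * (\<Sum>s'\<in>UNIV. P s a s' * Vs P R \<gamma> \<pi> s'))) =
      \<gamma> * (\<Sum>s'\<in>UNIV. Ppol P \<pi>' s s' * Vs P R \<gamma> \<pi> s')"
    unfolding Ppol_def sum_distrib_left sum_distrib_right
    by (rule trans[OF sum.swap]) (simp add: mult_ac)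
  then show ?thesis
    unfolding Qsa_def Rpol_def inner_vec_def by (simp add: distrib_left sum.distrib)
qed

lemma Vstar_eq_Vrho:
  assumes "\<pi>s \<in> policies" "\<forall>\<pi>'\<in>policies. \<forall>s. Vs P R \<gamma> \<pi>s s \<le> Vs P R \<gamma> \<pi>' s"
    and "\<forall>s. 0 \<le> \<rho> s"
  shows "Vstar P R \<gamma> \<rho> = Vrho P R \<gamma> \<rho> \<pi>s"
proof -
  have "Vrho P R \<gamma> \<rho> \<pi>s \<le> Vrho P R \<gamma> \<rho> \<pi>'" if "\<pi>' \<in> policies" for \<pi>'
    unfolding Vrho_def using assms that by (intro sum_mono mult_left_mono) auto
  then show ?thesis
    unfolding Vstar_def by (intro cInf_eq_minimum) (use assms(1) in auto)
qed

lemma ratio_inf_cases [consumes 1]: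
  fixes p q :: "'s::finite \<Rightarrow> real"
  assumes "\<forall>s. 0 \<le> q s"
  obtains (infinite) "ratio_inf p q = \<infinity>"
    | (finite) r where "ratio_inf p q = ereal r" "\<forall>s. p s \<le> r * q s"
proof (cases "\<exists>s. q s = 0 \<and> p s \<noteq> 0")
  case True
  then have "\<infinity> \<le> ratio_inf p q"
    unfolding ratio_inf_def by (subst Max_ge_iff) auto
  then show ?thesis
    using infinite by (simp add: top_unique)
next
  case False
  define f where "f s = (if q s = 0 then 1 else p s / q s)" for s
  have "ratio_inf p q = Max (ereal ` range f)"
    unfolding ratio_inf_def image_image using False
    by (intro arg_cong[where f = Max] image_cong) (auto simp: f_def)
  also have "\<dots> = ereal (Max (range f))"
    by (subst mono_Max_commute[of ereal]) (auto simp: mono_def)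
  finally have "ratio_inf p q = ereal (Max (range f))" .
  moreover have "p s \<le> Max (range f) * q s" for s
  proof (cases "q s = 0")
    case True
    then show ?thesis using False by simp
  next
    case False
    then have "p s / q s \<le> Max (range f)"
      using Max_ge[of "range f" "f s"] by (simp add: f_def)
    then show ?thesis
      using False assms by (simp add: divide_le_eq less_le)
  qed
  ultimately show ?thesis
    using finite by blast
qed

locale discounted_mdp =
  fixes P :: "'s::finite \<Rightarrow> 'a::finite \<Rightarrow> 's \<Rightarrow> real" and R :: "'s \<Rightarrow> 'a \<Rightarrow> real" and \<gamma> :: real
  assumes is_mdp: "is_mdp P R \<gamma>"
begin

lemma discount_pos: "0 < \<gamma>" and discount_less_1: "\<gamma> < 1"
  using is_mdp unfolding is_mdp_def by auto

lemma Ppol_nonneg: "\<pi> \<in> policies \<Longrightarrow> 0 \<le> Ppol P \<pi> s s'"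
  using is_mdp unfolding Ppol_def policies_def actdist_def is_mdp_def
  by (auto intro!: sum_nonneg)

lemma Ppol_sum: "\<pi> \<in> policies \<Longrightarrow> (\<Sum>s'\<in>UNIV. Ppol P \<pi> s s') = 1"
proof -
  assume "\<pi> \<in> policies"
  have "(\<Sum>s'\<in>UNIV. Ppol P \<pi> s s') = (\<Sum>a\<in>UNIV. \<pi> s $ a * (\<Sum>s'\<in>UNIV. P s a s'))"
    unfolding Ppol_def sum_distrib_left by (rule sum.swap)
  also have "\<dots> = 1"
    using is_mdp \<open>\<pi> \<in> policies\<close> unfolding is_mdp_def policies_def actdist_def by simp
  finally show ?thesis .
qed

lemma Pstep_nonneg: "\<pi> \<in> policies \<Longrightarrow> 0 \<le> Pstep P \<pi> t s s'"
  by (induction t arbitrary: s') (auto intro!: sum_nonneg mult_nonneg_nonneg Ppol_nonneg)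

lemma Pstep_sum: "\<pi> \<in> policies \<Longrightarrow> (\<Sum>s'\<in>UNIV. Pstep P \<pi> t s s') = 1"
proof (induction t)
  case (Suc t)
  have "(\<Sum>s''\<in>UNIV. Pstep P \<pi> (Suc t) s s'')
      = (\<Sum>s'\<in>UNIV. Pstep P \<pi> t s s' * (\<Sum>s''\<in>UNIV. Ppol P \<pi> s' s''))"
    unfolding Pstep.simps sum_distrib_left sum_distrib_right by (rule sum.swap)
  then show ?case using Suc Ppol_sum by simp
qed simp

lemma Pstep_le_1: "\<pi> \<in> policies \<Longrightarrow> Pstep P \<pi> t s s' \<le> 1"
  using member_le_sum[of s' UNIV "Pstep P \<pi> t s"] Pstep_nonneg Pstep_sum by simp

lemma abs_Pexp_le: "\<pi> \<in> policies \<Longrightarrow> \<bar>Pexp P \<pi> t s g\<bar> \<le> (\<Sum>s'\<in>UNIV. \<bar>g s'\<bar>)"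
  unfolding Pexp_def
  by (rule order_trans[OF sum_abs sum_mono])
    (simp add: abs_mult Pstep_nonneg Pstep_le_1 mult_left_le_one_le)

lemma summable_Pexp: "\<pi> \<in> policies \<Longrightarrow> summable (\<lambda>t. \<gamma> ^ t * Pexp P \<pi> t s g)"
proof (rule summable_comparison_test')
  show "summable (\<lambda>t. (\<Sum>s'\<in>UNIV. \<bar>g s'\<bar>) * \<gamma> ^ t)"
    using discount_pos discount_less_1 by (intro summable_mult summable_geometric) auto
  show "norm (\<gamma> ^ t * Pexp P \<pi> t s g) \<le> (\<Sum>s'\<in>UNIV. \<bar>g s'\<bar>) * \<gamma> ^ t"
    if "\<pi> \<in> policies" for t
    using abs_Pexp_le[OF that] discount_pos
    by (simp add: abs_mult mult.commute mult_left_mono)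
qed

lemma bellman:
  assumes "\<pi> \<in> policies"
  shows "Vs P R \<gamma> \<pi> s = Rpol R \<pi> s + \<gamma> * (\<Sum>s'\<in>UNIV. Ppol P \<pi> s s' * Vs P R \<gamma> \<pi> s')"
proof -
  let ?f = "\<lambda>t. \<gamma> ^ t * Pexp P \<pi> t s (Rpol R \<pi>)"
  have "Vs P R \<gamma> \<pi> s = (\<Sum>t. ?f (Suc t)) + ?f 0"
    unfolding Vs_eq_Pexp using suminf_split_head[OF summable_Pexp[OF assms]] by simp
  also have "?f 0 = Rpol R \<pi> s"
    by (simp add: Pexp_0)
  also have "(\<Sum>t. ?f (Suc t))
      = (\<Sum>t. \<Sum>s'\<in>UNIV. \<gamma> * (Ppol P \<pi> s s' * (\<gamma> ^ t * Pexp P \<pi> t s' (Rpol R \<pi>))))"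
    by (simp add: Pexp_Suc_left sum_distrib_left mult_ac)
  also have "\<dots> = (\<Sum>s'\<in>UNIV. \<Sum>t. \<gamma> * (Ppol P \<pi> s s' * (\<gamma> ^ t * Pexp P \<pi> t s' (Rpol R \<pi>))))"
    by (rule suminf_sum) (intro summable_mult summable_Pexp[OF assms])
  also have "\<dots> = (\<Sum>s'\<in>UNIV. \<gamma> * (Ppol P \<pi> s s' * Vs P R \<gamma> \<pi> s'))"
    unfolding Vs_eq_Pexp
    by (subst suminf_mult[symmetric], intro summable_mult summable_Pexp[OF assms])+ simp
  finally show ?thesis
    by (simp add: sum_distrib_left)
qed

lemma inner_Qsa_self: "\<pi> \<in> policies \<Longrightarrow> \<pi> s \<bullet> Qsa P R \<gamma> \<pi> s = Vs P R \<gamma> \<pi> s"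
  unfolding inner_Qsa by (rule bellman[symmetric])

lemma dvis_eq_Pexp:
  "dvis P \<gamma> \<pi> s s' = (1 - \<gamma>) * (\<Sum>t. \<gamma> ^ t * Pexp P \<pi> t s (\<lambda>x. if x = s' then 1 else 0))"
  unfolding dvis_def Pexp_indicator ..

text \<open>Telescoping: by the Bellman equation for \<pi>, the discounted expectation of the advantage
  of \<pi>' at time t is that of the cost of \<pi>' plus a_(t+1) - a_t.\<close>
lemma performance_difference:
  assumes \<pi>: "\<pi> \<in> policies" and \<pi>': "\<pi>' \<in> policies"
  shows "(1 - \<gamma>) * (Vs P R \<gamma> \<pi>' s - Vs P R \<gamma> \<pi> s) =
     (\<Sum>s'\<in>UNIV. dvis P \<gamma> \<pi>' s s' * ((\<pi>' s' - \<pi> s') \<bullet> Qsa P R \<gamma> \<pi> s'))"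
proof -
  define V where "V = Vs P R \<gamma> \<pi>"
  define g where "g s' = (\<pi>' s' - \<pi> s') \<bullet> Qsa P R \<gamma> \<pi> s'" for s'
  define a where "a t = \<gamma> ^ t * Pexp P \<pi>' t s V" for t
  have g: "g = (\<lambda>x. Rpol R \<pi>' x + \<gamma> * (\<Sum>s''\<in>UNIV. Ppol P \<pi>' x s'' * V s'') - V x)"
    unfolding g_def V_def inner_diff_left inner_Qsa[of \<pi>'] inner_Qsa_self[OF \<pi>] ..
  have "\<gamma> ^ t * Pexp P \<pi>' t s g = \<gamma> ^ t * Pexp P \<pi>' t s (Rpol R \<pi>') + (a (Suc t) - a t)" for t
    unfolding g a_def Pexp_Suc unfolding Pexp_def
    by (simp add: algebra_simps sum.distrib sum_subtractf sum_distrib_left)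
  moreover have "(\<lambda>t. \<gamma> ^ t * Pexp P \<pi>' t s (Rpol R \<pi>')) sums Vs P R \<gamma> \<pi>' s"
    unfolding Vs_eq_Pexp using summable_Pexp[OF \<pi>'] by (simp add: summable_sums)
  moreover have "(\<lambda>t. a (Suc t) - a t) sums (0 - a 0)"
    unfolding a_def by (intro telescope_sums summable_LIMSEQ_zero summable_Pexp[OF \<pi>'])
  ultimately have "(\<lambda>t. \<gamma> ^ t * Pexp P \<pi>' t s g) sums (Vs P R \<gamma> \<pi>' s - V s)"
    using sums_add by (fastforce simp: a_def Pexp_0)
  then have series: "(\<Sum>t. \<gamma> ^ t * Pexp P \<pi>' t s g) = Vs P R \<gamma> \<pi>' s - V s"
    by (simp add: sums_iff)
  have "(\<Sum>s'\<in>UNIV. dvis P \<gamma> \<pi>' s s' * g s')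
      = (1 - \<gamma>) * (\<Sum>s'\<in>UNIV. \<Sum>t. \<gamma> ^ t * Pexp P \<pi>' t s (\<lambda>x. if x = s' then 1 else 0) * g s')"
    unfolding dvis_eq_Pexp
    by (simp add: sum_distrib_left suminf_mult2 summable_Pexp[OF \<pi>'] mult.assoc)
  also have "(\<Sum>s'\<in>UNIV. \<Sum>t. \<gamma> ^ t * Pexp P \<pi>' t s (\<lambda>x. if x = s' then 1 else 0) * g s')
      = (\<Sum>t. \<Sum>s'\<in>UNIV. \<gamma> ^ t * Pexp P \<pi>' t s (\<lambda>x. if x = s' then 1 else 0) * g s')"
    by (rule suminf_sum[symmetric]) (intro summable_mult2 summable_Pexp[OF \<pi>'])
  also have "(\<lambda>t. \<Sum>s'\<in>UNIV. \<gamma> ^ t * Pexp P \<pi>' t s (\<lambda>x. if x = s' then 1 else 0) * g s')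
      = (\<lambda>t. \<gamma> ^ t * Pexp P \<pi>' t s g)"
    unfolding Pexp_indicator unfolding Pexp_def by (simp add: sum_distrib_left mult_ac)
  finally show ?thesis
    unfolding series g_def V_def by simp
qed

lemma dvis_nonneg: "\<pi> \<in> policies \<Longrightarrow> 0 \<le> dvis P \<gamma> \<pi> s s'"
  unfolding dvis_def using discount_pos discount_less_1
  by (intro mult_nonneg_nonneg suminf_nonneg)
    (auto simp: Pstep_nonneg summable_Pexp[of _ s "\<lambda>x. if x = s' then 1 else 0", unfolded Pexp_indicator])

lemma dvis_diag_ge: assumes "\<pi> \<in> policies" shows "1 - \<gamma> \<le> dvis P \<gamma> \<pi> s s"
proof -
  let ?f = "\<lambda>t. \<gamma> ^ t * Pstep P \<pi> t s s"
  have "sum ?f {0} \<le> (\<Sum>t. ?f t)"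
    using summable_Pexp[OF assms, of s "\<lambda>x. if x = s then 1 else 0"] discount_pos Pstep_nonneg[OF assms]
    by (intro sum_le_suminf) (auto simp: Pexp_indicator)
  then show ?thesis
    unfolding dvis_def using discount_less_1 by simp
qed

lemma dvis_sum: assumes "\<pi> \<in> policies" shows "(\<Sum>s'\<in>UNIV. dvis P \<gamma> \<pi> s s') = 1"
proof -
  have "(\<Sum>s'\<in>UNIV. \<Sum>t. \<gamma> ^ t * Pstep P \<pi> t s s') = (\<Sum>t. \<Sum>s'\<in>UNIV. \<gamma> ^ t * Pstep P \<pi> t s s')"
    using summable_Pexp[OF assms, of s] unfolding Pexp_indicator[symmetric]
    by (intro suminf_sum[symmetric]) blast
  also have "\<dots> = (\<Sum>t. \<gamma> ^ t)"
    by (simp add: sum_distrib_left[symmetric] Pstep_sum[OF assms])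
  also have "\<dots> = 1 / (1 - \<gamma>)"
    using discount_pos discount_less_1 by (simp add: suminf_geometric)
  finally show ?thesis
    unfolding dvis_def using discount_less_1 by (simp add: sum_distrib_left[symmetric])
qed

lemma drho_nonneg: "\<pi> \<in> policies \<Longrightarrow> \<forall>s. 0 \<le> \<rho> s \<Longrightarrow> 0 \<le> drho P \<gamma> \<rho> \<pi> s'"
  unfolding drho_def by (intro sum_nonneg mult_nonneg_nonneg) (auto simp: dvis_nonneg)

lemma drho_ge: assumes "\<pi> \<in> policies" "\<forall>s. 0 \<le> \<rho> s" shows "(1 - \<gamma>) * \<rho> s' \<le> drho P \<gamma> \<rho> \<pi> s'"
proof -
  have "\<rho> s' * (1 - \<gamma>) \<le> \<rho> s' * dvis P \<gamma> \<pi> s' s'"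
    using dvis_diag_ge[OF assms(1)] assms(2) by (intro mult_left_mono) auto
  also have "\<dots> \<le> drho P \<gamma> \<rho> \<pi> s'"
    unfolding drho_def using dvis_nonneg[OF assms(1)] assms(2)
    by (intro member_le_sum[of s' UNIV "\<lambda>s. \<rho> s * dvis P \<gamma> \<pi> s s'"]) auto
  finally show ?thesis by (simp add: mult.commute)
qed

lemma drho_sum:
  "\<pi> \<in> policies \<Longrightarrow> (\<Sum>s\<in>UNIV. \<rho> s) = 1 \<Longrightarrow> (\<Sum>s'\<in>UNIV. drho P \<gamma> \<rho> \<pi> s') = 1"
proof -
  assume "\<pi> \<in> policies" "(\<Sum>s\<in>UNIV. \<rho> s) = 1"
  have "(\<Sum>s'\<in>UNIV. drho P \<gamma> \<rho> \<pi> s') = (\<Sum>s\<in>UNIV. \<rho> s * (\<Sum>s'\<in>UNIV. dvis P \<gamma> \<pi> s s'))"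
    unfolding drho_def sum_distrib_left by (rule sum.swap)
  then show ?thesis
    using dvis_sum[OF \<open>\<pi> \<in> policies\<close>] \<open>(\<Sum>s\<in>UNIV. \<rho> s) = 1\<close> by simp
qed

lemma drho_bound_ge_1:
  assumes "\<pi> \<in> policies" "(\<Sum>s\<in>UNIV. \<rho> s) = 1" "\<forall>s. drho P \<gamma> \<rho> \<pi> s \<le> r * \<rho> s"
  shows "1 \<le> r"
proof -
  have "(\<Sum>s\<in>UNIV. drho P \<gamma> \<rho> \<pi> s) \<le> (\<Sum>s\<in>UNIV. r * \<rho> s)"
    using assms(3) by (intro sum_mono) auto
  then show ?thesis
    using drho_sum[OF assms(1,2)] assms(2) by (simp add: sum_distrib_left[symmetric])
qed

lemma mismatch_coefficient_cases [consumes 3]: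
  assumes "\<pi> \<in> policies" "\<forall>s. 0 \<le> \<rho> s" "(\<Sum>s\<in>UNIV. \<rho> s) = 1"
  obtains (infinite) "ratio_inf (drho P \<gamma> \<rho> \<pi>) \<rho> / ereal (1 - \<gamma>) = \<infinity>"
    | (finite) \<theta> where "ratio_inf (drho P \<gamma> \<rho> \<pi>) \<rho> / ereal (1 - \<gamma>) = ereal \<theta>" "1 < \<theta>"
        "\<forall>s. drho P \<gamma> \<rho> \<pi> s \<le> (1 - \<gamma>) * \<theta> * \<rho> s"
  using assms(2)
proof (cases rule: ratio_inf_cases[where p = "drho P \<gamma> \<rho> \<pi>"])
  case infinite
  then show ?thesis
    using that(1) discount_less_1 by simp
next
  case (finite r)
  have "1 \<le> r"
    using drho_bound_ge_1[OF assms(1,3)] finite(2) by blast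
  then have "1 < r / (1 - \<gamma>)"
    using discount_pos discount_less_1 by (simp add: less_divide_eq)
  moreover have "\<forall>s. drho P \<gamma> \<rho> \<pi> s \<le> (1 - \<gamma>) * (r / (1 - \<gamma>)) * \<rho> s"
    using finite(2) discount_less_1 by simp
  ultimately show ?thesis
    using that(2) finite(1) discount_less_1 by simp
qed

lemma performance_difference_rho:
  assumes "\<pi> \<in> policies" "\<pi>' \<in> policies"
  shows "(1 - \<gamma>) * (Vrho P R \<gamma> \<rho> \<pi>' - Vrho P R \<gamma> \<rho> \<pi>) =
     (\<Sum>s'\<in>UNIV. drho P \<gamma> \<rho> \<pi>' s' * ((\<pi>' s' - \<pi> s') \<bullet> Qsa P R \<gamma> \<pi> s'))"
proof -
  have "(1 - \<gamma>) * (Vrho P R \<gamma> \<rho> \<pi>' - Vrho P R \<gamma> \<rho> \<pi>)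
      = (\<Sum>s\<in>UNIV. \<rho> s * ((1 - \<gamma>) * (Vs P R \<gamma> \<pi>' s - Vs P R \<gamma> \<pi> s)))"
    unfolding Vrho_def sum_subtractf[symmetric] sum_distrib_left
    by (simp add: right_diff_distrib mult.left_commute)
  also have "\<dots> = (\<Sum>s'\<in>UNIV. drho P \<gamma> \<rho> \<pi>' s' * ((\<pi>' s' - \<pi> s') \<bullet> Qsa P R \<gamma> \<pi> s'))"
    unfolding performance_difference[OF assms] drho_def sum_distrib_left sum_distrib_right
    by (rule trans[OF sum.swap]) (simp add: mult_ac)
  finally show ?thesis .
qed

end

section \<open>Linear convergence of policy mirror descent\<close>

text \<open>The potential \<Delta>_k + D_k / ((\<theta> - 1) c \<eta>_k) contracts by the factor 1 - 1/\<theta>.\<close>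
lemma linear_rate_from_recursion:
  fixes \<Delta> D \<eta> :: "nat \<Rightarrow> real" and \<theta> c :: real
  assumes c: "0 < c" "c < 1" and \<theta>: "1 \<le> \<theta> * c"
    and \<eta>: "\<And>k. 0 < \<eta> k" "\<And>k. \<theta> * \<eta> k \<le> (\<theta> - 1) * \<eta> (Suc k)"
    and D: "\<And>k. 0 \<le> D k"
    and step: "\<And>k. \<theta> * \<Delta> (Suc k) \<le> (\<theta> - 1) * \<Delta> k + (D k - D (Suc k)) / (c * \<eta> k)"
  shows "\<Delta> k \<le> (1 - 1/\<theta>) ^ k * (\<Delta> 0 + D 0 / (\<eta> 0 * (1 - c)))"
proof -
  have \<theta>1: "1 < \<theta>"
  proof (rule ccontr)
    assume "\<not> 1 < \<theta>"
    then have "\<theta> * c \<le> 1 * c"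
      using c by (intro mult_right_mono) auto
    then show False
      using \<theta> c(2) by linarith
  qed
  define \<Phi> where "\<Phi> k = \<Delta> k + D k / ((\<theta> - 1) * c * \<eta> k)" for k
  have contract: "\<Phi> (Suc k) \<le> (1 - 1/\<theta>) * \<Phi> k" for k
  proof -
    have pos: "0 < \<theta> * c * \<eta> k"
      using \<theta>1 c \<eta>(1)[of k] by simp
    have "\<theta> * c * \<eta> k \<le> (\<theta> - 1) * c * \<eta> (Suc k)"
      using mult_left_mono[OF \<eta>(2)[of k], of c] c by (simp add: mult_ac)
    then have next_term: "D (Suc k) / ((\<theta> - 1) * c * \<eta> (Suc k)) \<le> D (Suc k) / (\<theta> * c * \<eta> k)"
      using pos D by (intro divide_left_mono) auto
    have "\<Delta> (Suc k) \<le> ((\<theta> - 1) * \<Delta> k + (D k - D (Suc k)) / (c * \<eta> k)) / \<theta>"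
      using step[of k] \<theta>1 by (simp add: le_divide_eq mult.commute)
    also have "\<dots> = (\<theta> - 1) / \<theta> * \<Delta> k + (D k - D (Suc k)) / (\<theta> * c * \<eta> k)"
      using \<theta>1 c \<eta>(1)[of k] by (simp add: field_simps)
    also have "\<dots> = (1 - 1/\<theta>) * \<Phi> k - D (Suc k) / (\<theta> * c * \<eta> k)"
      unfolding \<Phi>_def using \<theta>1 c \<eta>(1)[of k] by (simp add: field_simps)
    finally show ?thesis
      using next_term unfolding \<Phi>_def by simp
  qed
  have \<Phi>_le: "\<Phi> k \<le> (1 - 1/\<theta>) ^ k * \<Phi> 0" for k
  proof (induction k)
    case (Suc k)
    have "\<Phi> (Suc k) \<le> (1 - 1/\<theta>) * \<Phi> k" by (rule contract)
    also have "\<dots> \<le> (1 - 1/\<theta>) * ((1 - 1/\<theta>) ^ k * \<Phi> 0)"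
      using Suc \<theta>1 by (intro mult_left_mono) auto
    finally show ?case by (simp add: mult.assoc)
  qed simp
  have "(1 - c) * \<eta> 0 \<le> (\<theta> - 1) * c * \<eta> 0"
    using \<theta> \<eta>(1)[of 0] by (intro mult_right_mono) (auto simp: algebra_simps)
  then have "D 0 / ((\<theta> - 1) * c * \<eta> 0) \<le> D 0 / (\<eta> 0 * (1 - c))"
    using c \<eta>(1)[of 0] D[of 0] by (subst mult.commute) (intro divide_left_mono, auto)
  then have \<Phi>0: "\<Phi> 0 \<le> \<Delta> 0 + D 0 / (\<eta> 0 * (1 - c))"
    unfolding \<Phi>_def by simp
  have "\<Delta> k \<le> \<Phi> k"
    unfolding \<Phi>_def using D[of k] \<theta>1 c \<eta>(1)[of k] by simp
  also have "\<dots> \<le> (1 - 1/\<theta>) ^ k * \<Phi> 0"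
    by (rule \<Phi>_le)
  also have "\<dots> \<le> (1 - 1/\<theta>) ^ k * (\<Delta> 0 + D 0 / (\<eta> 0 * (1 - c)))"
    using \<Phi>0 \<theta>1 by (intro mult_left_mono) auto
  finally show ?thesis .
qed

locale policy_mirror_descent = discounted_mdp P R \<gamma>
  for P :: "'s::finite \<Rightarrow> 'a::finite \<Rightarrow> 's \<Rightarrow> real" and R \<gamma> +
  fixes C :: "(real^'a) set" and h :: "real^'a \<Rightarrow> real"
    and \<pi> :: "nat \<Rightarrow> 's \<Rightarrow> real^'a" and \<eta> :: "nat \<Rightarrow> real"
  assumes legendre: "legendre C h"
    and actdist_subset: "actdist \<subseteq> C" and rint_actdist_subset: "rint_actdist \<subseteq> rel_interior C"
    and init: "\<pi> 0 \<in> rint_policies"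
    and steps: "\<forall>k. pmd_step P R \<gamma> h (\<eta> k) (\<pi> k) (\<pi> (Suc k))"
begin

lemma step_argmin:
  "is_arg_min (\<lambda>p. \<eta> k * (Qsa P R \<gamma> (\<pi> k) s \<bullet> p) + bregman h p (\<pi> k s)) (\<lambda>p. p \<in> actdist)
     (\<pi> (Suc k) s)"
  using steps unfolding pmd_step_def by blast

lemma iterate_actdist_interior: "\<pi> k s \<in> actdist \<and> \<pi> k s \<in> interior C"
proof (induction k arbitrary: s)
  case 0
  then show ?case
    using init rint_actdist_subset legendre_rel_interior_eq[OF legendre]
    unfolding rint_policies_def rint_actdist_def actdist_def by (auto simp: less_imp_le)
next
  case (Suc k)
  then show ?case
    using step_argmin pmd_argmin_interior[OF legendre actdist_subset _ _ step_argmin]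
    unfolding is_arg_min_def by blast
qed

lemma iterate_policies: "\<pi> k \<in> policies"
  using iterate_actdist_interior unfolding policies_def by blast

lemma iterate_interior: "\<pi> k s \<in> interior C"
  using iterate_actdist_interior by blast

lemma step_descent:
  assumes "0 \<le> \<eta> k"
  shows "(\<pi> (Suc k) s - \<pi> k s) \<bullet> Qsa P R \<gamma> (\<pi> k) s \<le> 0"
proof -
  have "Qsa P R \<gamma> (\<pi> k) s \<bullet> \<pi> (Suc k) s \<le> Qsa P R \<gamma> (\<pi> k) s \<bullet> \<pi> k s"
    using pmd_descent[OF legendre actdist_subset _ iterate_interior step_argmin assms]
      iterate_actdist_interior by blast
  then show ?thesis
    by (subst inner_commute) (simp add: inner_diff_right)
qed

lemma step_three_point:
  assumes "x \<in> actdist"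
  shows "\<eta> k * ((\<pi> (Suc k) s - x) \<bullet> Qsa P R \<gamma> (\<pi> k) s)
           \<le> bregman h x (\<pi> k s) - bregman h x (\<pi> (Suc k) s)"
proof -
  have "0 \<le> bregman h (\<pi> (Suc k) s) (\<pi> k s)"
    using bregman_nonneg[OF legendre _ iterate_interior] iterate_actdist_interior actdist_subset
    by blast
  moreover have "\<eta> k * (Qsa P R \<gamma> (\<pi> k) s \<bullet> \<pi> (Suc k) s) + bregman h (\<pi> (Suc k) s) (\<pi> k s)
      \<le> \<eta> k * (Qsa P R \<gamma> (\<pi> k) s \<bullet> x) + bregman h x (\<pi> k s) - bregman h x (\<pi> (Suc k) s)"
    using pmd_three_point[OF legendre actdist_subset _ iterate_interior step_argmin assms]
      iterate_actdist_interior by blast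
  ultimately show ?thesis
    by (subst inner_commute) (simp add: inner_diff_right right_diff_distrib)
qed

lemma Dstar_nonneg: "\<pi>s \<in> policies \<Longrightarrow> \<forall>s. 0 \<le> \<rho> s \<Longrightarrow> 0 \<le> Dstar P \<gamma> \<rho> h \<pi>s (\<pi> k)"
  unfolding Dstar_def policies_def
  using drho_nonneg bregman_nonneg[OF legendre subsetD[OF actdist_subset] iterate_interior]
  by (intro sum_nonneg mult_nonneg_nonneg) (auto simp: policies_def)

text \<open>The state distribution of the new policy dominates (1 - \<gamma>) \<rho>, and the improvements
  are nonpositive.\<close>
lemma Vrho_step_le:
  assumes "0 \<le> \<eta> k" "\<forall>s. 0 \<le> \<rho> s"
  shows "Vrho P R \<gamma> \<rho> (\<pi> (Suc k)) - Vrho P R \<gamma> \<rho> (\<pi> k)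
           \<le> (\<Sum>s\<in>UNIV. \<rho> s * ((\<pi> (Suc k) s - \<pi> k s) \<bullet> Qsa P R \<gamma> (\<pi> k) s))"
proof -
  have "(1 - \<gamma>) * (Vrho P R \<gamma> \<rho> (\<pi> (Suc k)) - Vrho P R \<gamma> \<rho> (\<pi> k))
      = (\<Sum>s\<in>UNIV. drho P \<gamma> \<rho> (\<pi> (Suc k)) s * ((\<pi> (Suc k) s - \<pi> k s) \<bullet> Qsa P R \<gamma> (\<pi> k) s))"
    by (rule performance_difference_rho[OF iterate_policies iterate_policies])
  also have "\<dots> \<le> (\<Sum>s\<in>UNIV. (1 - \<gamma>) * \<rho> s * ((\<pi> (Suc k) s - \<pi> k s) \<bullet> Qsa P R \<gamma> (\<pi> k) s))"
    using drho_ge[OF iterate_policies assms(2)] step_descent[OF assms(1)]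
    by (intro sum_mono mult_right_mono_neg) auto
  finally show ?thesis
    using discount_less_1 by (simp add: sum_distrib_left[symmetric] mult.assoc)
qed

lemma Vrho_le_initial:
  assumes "\<forall>k. 0 \<le> \<eta> k" "\<forall>s. 0 \<le> \<rho> s"
  shows "Vrho P R \<gamma> \<rho> (\<pi> k) \<le> Vrho P R \<gamma> \<rho> (\<pi> 0)"
proof (induction k)
  case (Suc k)
  have "(\<Sum>s\<in>UNIV. \<rho> s * ((\<pi> (Suc k) s - \<pi> k s) \<bullet> Qsa P R \<gamma> (\<pi> k) s)) \<le> 0"
    using assms step_descent by (intro sum_nonpos mult_nonneg_nonpos) auto
  then show ?case
    using Vrho_step_le[of k \<rho>] assms Suc by simp
qed simp

lemma step_three_point_sum:
  assumes "\<pi>s \<in> policies" "\<forall>s. 0 \<le> \<rho> s" "0 < \<eta> k"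
  shows "(\<Sum>s\<in>UNIV. drho P \<gamma> \<rho> \<pi>s s * ((\<pi> (Suc k) s - \<pi> k s) \<bullet> Qsa P R \<gamma> (\<pi> k) s))
      \<le> (\<Sum>s\<in>UNIV. drho P \<gamma> \<rho> \<pi>s s * ((\<pi>s s - \<pi> k s) \<bullet> Qsa P R \<gamma> (\<pi> k) s))
        + (Dstar P \<gamma> \<rho> h \<pi>s (\<pi> k) - Dstar P \<gamma> \<rho> h \<pi>s (\<pi> (Suc k))) / \<eta> k"
proof -
  let ?d = "drho P \<gamma> \<rho> \<pi>s" and ?Q = "Qsa P R \<gamma> (\<pi> k)"
  let ?B = "\<lambda>s. bregman h (\<pi>s s) (\<pi> k s) - bregman h (\<pi>s s) (\<pi> (Suc k) s)"
  have "(\<pi> (Suc k) s - \<pi> k s) \<bullet> ?Q s \<le> (\<pi>s s - \<pi> k s) \<bullet> ?Q s + ?B s / \<eta> k" for s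
  proof -
    have "\<eta> k * ((\<pi> (Suc k) s - \<pi>s s) \<bullet> ?Q s) \<le> ?B s"
      using step_three_point assms(1) unfolding policies_def by blast
    then have "(\<pi> (Suc k) s - \<pi>s s) \<bullet> ?Q s \<le> ?B s / \<eta> k"
      using assms(3) by (simp add: le_divide_eq mult.commute)
    then show ?thesis
      by (simp add: inner_diff_left)
  qed
  then have "(\<Sum>s\<in>UNIV. ?d s * ((\<pi> (Suc k) s - \<pi> k s) \<bullet> ?Q s))
      \<le> (\<Sum>s\<in>UNIV. ?d s * ((\<pi>s s - \<pi> k s) \<bullet> ?Q s + ?B s / \<eta> k))"
    using drho_nonneg[OF assms(1,2)] by (intro sum_mono mult_left_mono) auto
  then show ?thesis
    unfolding Dstar_def
    by (simp add: distrib_left sum.distrib sum_divide_distrib[symmetric] right_diff_distrib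
        sum_subtractf diff_divide_distrib)
qed

lemma step_contraction:
  assumes \<pi>s: "\<pi>s \<in> policies" and \<rho>: "\<forall>s. 0 \<le> \<rho> s"
    and d: "\<forall>s. drho P \<gamma> \<rho> \<pi>s s \<le> (1 - \<gamma>) * \<theta> * \<rho> s" and "0 \<le> \<theta>" and \<eta>: "0 < \<eta> k"
  shows "\<theta> * (Vrho P R \<gamma> \<rho> (\<pi> (Suc k)) - Vrho P R \<gamma> \<rho> \<pi>s)
      \<le> (\<theta> - 1) * (Vrho P R \<gamma> \<rho> (\<pi> k) - Vrho P R \<gamma> \<rho> \<pi>s)
        + (Dstar P \<gamma> \<rho> h \<pi>s (\<pi> k) - Dstar P \<gamma> \<rho> h \<pi>s (\<pi> (Suc k))) / ((1 - \<gamma>) * \<eta> k)"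
proof -
  let ?V = "\<lambda>\<pi>. Vrho P R \<gamma> \<rho> \<pi>" and ?D = "\<lambda>\<pi>. Dstar P \<gamma> \<rho> h \<pi>s \<pi>"
  let ?a = "\<lambda>s. (\<pi> (Suc k) s - \<pi> k s) \<bullet> Qsa P R \<gamma> (\<pi> k) s"
  have c: "0 \<le> (1 - \<gamma>) * \<theta>"
    using discount_less_1 \<open>0 \<le> \<theta>\<close> by simp
  have "(1 - \<gamma>) * \<theta> * (?V (\<pi> (Suc k)) - ?V (\<pi> k)) \<le> (1 - \<gamma>) * \<theta> * (\<Sum>s\<in>UNIV. \<rho> s * ?a s)"
    using Vrho_step_le[OF less_imp_le[OF \<eta>] \<rho>] c by (rule mult_left_mono)
  also have "\<dots> = (\<Sum>s\<in>UNIV. (1 - \<gamma>) * \<theta> * \<rho> s * ?a s)"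
    by (simp add: sum_distrib_left mult.assoc)
  also have "\<dots> \<le> (\<Sum>s\<in>UNIV. drho P \<gamma> \<rho> \<pi>s s * ?a s)"
    using d step_descent \<eta> by (intro sum_mono mult_right_mono_neg) auto
  also have "\<dots> \<le> (\<Sum>s\<in>UNIV. drho P \<gamma> \<rho> \<pi>s s * ((\<pi>s s - \<pi> k s) \<bullet> Qsa P R \<gamma> (\<pi> k) s))
      + (?D (\<pi> k) - ?D (\<pi> (Suc k))) / \<eta> k"
    by (rule step_three_point_sum[OF \<pi>s \<rho> \<eta>])
  also have "(\<Sum>s\<in>UNIV. drho P \<gamma> \<rho> \<pi>s s * ((\<pi>s s - \<pi> k s) \<bullet> Qsa P R \<gamma> (\<pi> k) s))
      = (1 - \<gamma>) * (?V \<pi>s - ?V (\<pi> k))"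
    by (rule performance_difference_rho[OF iterate_policies \<pi>s, symmetric])
  finally have "(1 - \<gamma>) * (\<theta> * (?V (\<pi> (Suc k)) - ?V (\<pi> k)))
      \<le> (1 - \<gamma>) * (?V \<pi>s - ?V (\<pi> k)) + (?D (\<pi> k) - ?D (\<pi> (Suc k))) / \<eta> k"
    by (simp add: mult.assoc)
  moreover have "(1 - \<gamma>) * (?V \<pi>s - ?V (\<pi> k)) + (?D (\<pi> k) - ?D (\<pi> (Suc k))) / \<eta> k
      = (1 - \<gamma>) * (?V \<pi>s - ?V (\<pi> k) + (?D (\<pi> k) - ?D (\<pi> (Suc k))) / ((1 - \<gamma>) * \<eta> k))"
    using discount_less_1 by (simp add: distrib_left)
  ultimately have "\<theta> * (?V (\<pi> (Suc k)) - ?V (\<pi> k))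
      \<le> ?V \<pi>s - ?V (\<pi> k) + (?D (\<pi> k) - ?D (\<pi> (Suc k))) / ((1 - \<gamma>) * \<eta> k)"
    using discount_less_1 by simp
  then show ?thesis
    by (simp add: algebra_simps)
qed

lemma linear_convergence:
  assumes \<pi>s: "\<pi>s \<in> policies" and \<rho>: "\<forall>s. 0 \<le> \<rho> s" "(\<Sum>s\<in>UNIV. \<rho> s) = 1"
    and d: "\<forall>s. drho P \<gamma> \<rho> \<pi>s s \<le> (1 - \<gamma>) * \<theta> * \<rho> s"
    and \<eta>: "0 < \<eta> 0" "\<forall>k. \<theta> * \<eta> k \<le> (\<theta> - 1) * \<eta> (Suc k)"
  shows "Vrho P R \<gamma> \<rho> (\<pi> k) - Vrho P R \<gamma> \<rho> \<pi>s \<le> (1 - 1/\<theta>) ^ k *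
           (Vrho P R \<gamma> \<rho> (\<pi> 0) - Vrho P R \<gamma> \<rho> \<pi>s + Dstar P \<gamma> \<rho> h \<pi>s (\<pi> 0) / (\<eta> 0 * \<gamma>))"
proof -
  have \<theta>c: "1 \<le> \<theta> * (1 - \<gamma>)"
    using drho_bound_ge_1[OF \<pi>s \<rho>(2)] d by (simp add: mult_ac)
  then have "0 < \<theta> * (1 - \<gamma>)"
    by linarith
  then have "0 < \<theta>"
    using discount_less_1 by (simp add: zero_less_mult_iff)
  then have "\<theta> * (1 - \<gamma>) < \<theta>"
    using discount_pos by simp
  then have \<theta>1: "1 < \<theta>"
    using \<theta>c by linarith
  have \<eta>_pos: "0 < \<eta> k" for k
  proof (induction k)
    case (Suc k)
    then have "0 < (\<theta> - 1) * \<eta> (Suc k)"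
      using \<eta>(2) \<theta>1 by (smt (verit) mult_pos_pos)
    then show ?case
      using \<theta>1 by (simp add: zero_less_mult_iff)
  qed (rule \<eta>(1))
  show ?thesis
    using linear_rate_from_recursion[where c = "1 - \<gamma>" and \<theta> = \<theta> and \<eta> = \<eta>,
        OF _ _ \<theta>c \<eta>_pos _ Dstar_nonneg[OF \<pi>s \<rho>(1)] step_contraction[OF \<pi>s \<rho>(1) d _ \<eta>_pos]]
      discount_pos discount_less_1 \<eta>(2) \<theta>1
    by simp
qed

end

theorem theorem10:
  fixes P :: "'s::finite \<Rightarrow> 'a::finite \<Rightarrow> 's \<Rightarrow> real"
    and R :: "'s \<Rightarrow> 'a \<Rightarrow> real"
    and \<gamma> :: real
    and C :: "(real^'a) set" and h :: "real^'a \<Rightarrow> real"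
    and \<rho> :: "'s \<Rightarrow> real"
    and \<pi>s :: "'s \<Rightarrow> real^'a"
    and \<pi> :: "nat \<Rightarrow> 's \<Rightarrow> real^'a"
    and \<eta> :: "nat \<Rightarrow> real"
    and \<theta> :: ereal
  assumes mdp: "is_mdp P R \<gamma>"
    and leg: "legendre C h"
    and dom: "actdist \<subseteq> C" "rint_actdist \<subseteq> rel_interior C"
    and rho: "\<forall>s. 0 \<le> \<rho> s" "(\<Sum>s\<in>UNIV. \<rho> s) = 1"
    and opt: "\<pi>s \<in> policies" "\<forall>\<pi>'\<in>policies. \<forall>s. Vs P R \<gamma> \<pi>s s \<le> Vs P R \<gamma> \<pi>' s"
    and init: "\<pi> 0 \<in> rint_policies"
    and pmd: "\<forall>k. pmd_step P R \<gamma> h (\<eta> k) (\<pi> k) (\<pi> (Suc k))"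
    and theta: "\<theta> = ratio_inf (drho P \<gamma> \<rho> \<pi>s) \<rho> / ereal (1 - \<gamma>)"
    and eta0: "\<eta> 0 > 0"
    and eta: "\<forall>k. ereal (\<eta> (Suc k)) \<ge> \<theta> / (\<theta> - 1) * ereal (\<eta> k)"
  shows "\<forall>k. ereal (Vrho P R \<gamma> \<rho> (\<pi> k) - Vstar P R \<gamma> \<rho>) \<le>
           (1 - 1 / \<theta>) ^ k *
           ereal (Vrho P R \<gamma> \<rho> (\<pi> 0) - Vstar P R \<gamma> \<rho> + Dstar P \<gamma> \<rho> h \<pi>s (\<pi> 0) / (\<eta> 0 * \<gamma>))"
proof -
  interpret policy_mirror_descent P R \<gamma> C h \<pi> \<eta>
    using mdp leg dom init pmd by unfold_locales
  have Vstar: "Vstar P R \<gamma> \<rho> = Vrho P R \<gamma> \<rho> \<pi>s"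
    using Vstar_eq_Vrho opt rho(1) .
  show ?thesis
    using opt(1) rho
  proof (cases rule: mismatch_coefficient_cases)
    case infinite
    then have \<theta>: "\<theta> = \<infinity>"
      using theta by simp
    have "0 \<le> \<eta> k" for k
      using eta0 eta \<theta> by (cases k) (auto simp: divide_ereal_def)
    then have "Vrho P R \<gamma> \<rho> (\<pi> k) \<le> Vrho P R \<gamma> \<rho> (\<pi> 0)" for k
      using Vrho_le_initial rho(1) by blast
    moreover have "0 \<le> Dstar P \<gamma> \<rho> h \<pi>s (\<pi> 0) / (\<eta> 0 * \<gamma>)"
      using Dstar_nonneg[OF opt(1) rho(1)] eta0 discount_pos by simp
    ultimately show ?thesis
      using \<theta> Vstar by (simp add: add_increasing2)
  next
    case (finite \<theta>')
    then have "\<theta> / (\<theta> - 1) = ereal (\<theta>' / (\<theta>' - 1))" and "1 - 1 / \<theta> = ereal (1 - 1 / \<theta>')"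
      using theta by (simp_all add: one_ereal_def)
    then show ?thesis
      using linear_convergence[OF opt(1) rho finite(3)] eta0 eta finite(2) Vstar
      by (simp add: field_simps ereal_power)
  qed
qed

end
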